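(* Let $A=(A(i,j))_{i,j\in\mathbb{N}}$ be an infinite matrix with entries in $\{0,1\}$ having no identically zero rows, let $(X,\mu)$ be a measure space, and let $\{R_j\}_{j=1}^\infty$ and $\{D_j\}_{j=1}^\infty$ be families of measurable subsets of $X$ such that (a) $\mu(R_i\cap R_j)=0$ for all $i\neq j$; (b) $X\stackrel{\mu\text{-a.e.}}{=}\bigcup_{j=1}^\infty R_j$; (c) $D_i\stackrel{\mu\text{-a.e.}}{=}\bigcup_{j\in\mathbb{N}:A(i,j)=1}R_j$ for every $i$. Then: (1) for all $i,j$, $\mu(R_j\cap D_i)=0$ if $A(i,j)=0$ and $\mu(R_j\setminus D_i)=0$ if $A(i,j)=1$; and (2) for each pair $U,V$ of finite subsets of $\mathbb{N}$ such that $A(U,V,j)=1$ for only finitely many $j$, $$\bigcap_{u\in U}D_u\cap\bigcap_{v\in V}(X\setminus D_v)\stackrel{\mu\text{-a.e.}}{=}\bigcup_{j\in\mathbb{N}:A(U,V,j)=1}R_j.$$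
   Context: For measurable $Y,Z\subseteq X$, $Y\stackrel{\mu\text{-a.e.}}{=}Z$ means $\mu(Y\setminus Z)=0=\mu(Z\setminus Y)$. For finite $U,V\subseteq\mathbb{N}$ and $j\in\mathbb{N}$, $A(U,V,j)=\prod_{u\in U}A(u,j)\prod_{v\in V}(1-A(v,j))$. *)

theory Defs
  imports "HOL-Analysis.Analysis"
begin

definition ae_set_eq :: "'a measure \<Rightarrow> 'a set \<Rightarrow> 'a set \<Rightarrow> bool" where
  "ae_set_eq M Y Z \<longleftrightarrow> emeasure M (Y - Z) = 0 \<and> emeasure M (Z - Y) = 0"

definition Aprod :: "(nat \<Rightarrow> nat \<Rightarrow> nat) \<Rightarrow> nat set \<Rightarrow> nat set \<Rightarrow> nat \<Rightarrow> nat" where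
  "Aprod A U V j = (\<Prod>u\<in>U. A u j) * (\<Prod>v\<in>V. (1 - A v j))"

end

theory Submission
  imports Defs
begin

text \<open>Off a single null set every point lies in some cell R k, and for each i it lies in D i
  exactly when A(i,k) = 1: the null set collects the complement of the cells and the countably
  many discrepancies R k \<inter> D i with A(i,k) = 0 (null because the cells are almost disjoint)
  and R k - D i with A(i,k) = 1. Both sides of (2) are then decided at such a point by the same
  condition A(U,V,k) = 1. Neither the finiteness of {j. A(U,V,j) = 1} nor the nonvanishing of
  the rows of A is needed, since countable unions of null sets are null.\<close>

lemma ae_set_eqI_null_sets:
  assumes "Y - Z \<in> null_sets M" and "Z - Y \<in> null_sets M"
  shows "ae_set_eq M Y Z"
  using assms by (simp add: ae_set_eq_def null_setsD1)

lemma ae_set_eqD_null_sets: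
  assumes "ae_set_eq M Y Z" and "Y \<in> sets M" and "Z \<in> sets M"
  shows "Y - Z \<in> null_sets M" and "Z - Y \<in> null_sets M"
  using assms by (auto simp: ae_set_eq_def null_sets_def)

lemma ae_set_eq_if_agree_outside_null:
  assumes "Y \<in> sets M" and "Z \<in> sets M" and "N \<in> null_sets M"
    and "\<And>x. x \<in> space M - N \<Longrightarrow> x \<in> Y \<longleftrightarrow> x \<in> Z"
  shows "ae_set_eq M Y Z"
proof (rule ae_set_eqI_null_sets)
  have "Y - Z \<subseteq> N" "Z - Y \<subseteq> N"
    using assms(1,2,4) sets.sets_into_space by blast+
  then show "Y - Z \<in> null_sets M" and "Z - Y \<in> null_sets M"
    using assms(1-3) by (auto intro: null_sets_subset)
qed

lemma null_sets_diff_if_in_index: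
  fixes R :: "nat \<Rightarrow> 'a set"
  assumes "ae_set_eq M D (\<Union>k\<in>J. R k)" and "D \<in> sets M" and "range R \<subseteq> sets M"
    and "j \<in> J"
  shows "R j - D \<in> null_sets M"
proof -
  have "(\<Union>k\<in>J. R k) - D \<in> null_sets M"
    using assms(3) by (intro ae_set_eqD_null_sets(2)[OF assms(1,2)] sets.countable_UN') auto
  then show ?thesis
    by (rule null_sets_subset) (use assms in auto)
qed

lemma null_sets_inter_if_not_in_index:
  fixes R :: "nat \<Rightarrow> 'a set"
  assumes "ae_set_eq M D (\<Union>k\<in>J. R k)" and "D \<in> sets M" and "range R \<subseteq> sets M"
    and cells_null: "\<And>i k. i \<noteq> k \<Longrightarrow> R i \<inter> R k \<in> null_sets M"
    and "j \<notin> J"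
  shows "R j \<inter> D \<in> null_sets M"
proof -
  have "D - (\<Union>k\<in>J. R k) \<in> null_sets M"
    using assms(3) by (intro ae_set_eqD_null_sets(1)[OF assms(1,2)] sets.countable_UN') auto
  moreover have "(\<Union>k\<in>J. R j \<inter> R k) \<in> null_sets M"
    using \<open>j \<notin> J\<close> by (intro null_sets_UN') (auto intro: cells_null)
  ultimately have "(D - (\<Union>k\<in>J. R k)) \<union> (\<Union>k\<in>J. R j \<inter> R k) \<in> null_sets M"
    by blast
  then show ?thesis
    by (rule null_sets_subset) (use assms(2,3) in auto)
qed

lemma membership_determined_by_cell_AE:
  fixes R D :: "nat \<Rightarrow> 'a set" and J :: "nat \<Rightarrow> nat set"
  assumes R: "range R \<subseteq> sets M" and D: "range D \<subseteq> sets M"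
    and cells_null: "\<And>i k. i \<noteq> k \<Longrightarrow> R i \<inter> R k \<in> null_sets M"
    and cover: "ae_set_eq M (space M) (\<Union>k. R k)"
    and D_ae: "\<And>i. ae_set_eq M (D i) (\<Union>k\<in>J i. R k)"
  obtains N where "N \<in> null_sets M"
    and "\<And>x. x \<in> space M - N \<Longrightarrow> \<exists>k. x \<in> R k"
    and "\<And>x i k. x \<in> space M - N \<Longrightarrow> x \<in> R k \<Longrightarrow> x \<in> D i \<longleftrightarrow> k \<in> J i"
proof -
  define E where "E i k = (if k \<in> J i then R k - D i else R k \<inter> D i)" for i k
  define N where "N = (space M - (\<Union>k. R k)) \<union> (\<Union>i. \<Union>k. E i k)"
  have "E i k \<in> null_sets M" for i k
    using null_sets_diff_if_in_index[OF D_ae _ R] null_sets_inter_if_not_in_index[OF D_ae _ R cells_null]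
      D by (auto simp: E_def)
  moreover have "space M - (\<Union>k. R k) \<in> null_sets M"
    using R by (intro ae_set_eqD_null_sets(1)[OF cover]) auto
  ultimately have "N \<in> null_sets M"
    unfolding N_def by blast
  moreover have "\<exists>k. x \<in> R k" if "x \<in> space M - N" for x
    using that unfolding N_def by blast
  moreover have "x \<in> D i \<longleftrightarrow> k \<in> J i" if "x \<in> space M - N" and "x \<in> R k" for x i k
    using that by (auto simp: N_def E_def split: if_splits)
  ultimately show thesis
    by (rule that)
qed

lemma ae_set_eq_cell_intersection:
  fixes R D :: "nat \<Rightarrow> 'a set" and J :: "nat \<Rightarrow> nat set"
  assumes R: "range R \<subseteq> sets M" and D: "range D \<subseteq> sets M"
    and cells_null: "\<And>i k. i \<noteq> k \<Longrightarrow> R i \<inter> R k \<in> null_sets M"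
    and cover: "ae_set_eq M (space M) (\<Union>k. R k)"
    and D_ae: "\<And>i. ae_set_eq M (D i) (\<Union>k\<in>J i. R k)"
  shows "ae_set_eq M (space M \<inter> (\<Inter>u\<in>U. D u) \<inter> (\<Inter>v\<in>V. space M - D v))
           (\<Union>k\<in>{k. (\<forall>u\<in>U. k \<in> J u) \<and> (\<forall>v\<in>V. k \<notin> J v)}. R k)"
    (is "ae_set_eq M ?L ?S")
proof -
  obtain N where N: "N \<in> null_sets M"
    and covered: "\<And>x. x \<in> space M - N \<Longrightarrow> \<exists>k. x \<in> R k"
    and decided: "\<And>x i k. x \<in> space M - N \<Longrightarrow> x \<in> R k \<Longrightarrow> x \<in> D i \<longleftrightarrow> k \<in> J i"
    using membership_determined_by_cell_AE[OF R D cells_null cover D_ae] by blast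
  have "?L \<in> sets M"
    using D by auto
  moreover have "?S \<in> sets M"
    using R by blast
  moreover have "x \<in> ?L \<longleftrightarrow> x \<in> ?S" if x: "x \<in> space M - N" for x
  proof -
    have in_L: "x \<in> ?L \<longleftrightarrow> (\<forall>u\<in>U. k \<in> J u) \<and> (\<forall>v\<in>V. k \<notin> J v)" if "x \<in> R k" for k
      using decided[OF x that] x by blast
    obtain k where "x \<in> R k"
      using covered[OF x] by blast
    then show ?thesis
      using in_L by blast
  qed
  ultimately show ?thesis
    by (rule ae_set_eq_if_agree_outside_null[OF _ _ N])
qed

lemma Aprod_eq_1_iff:
  assumes "\<And>i j. A i j \<in> {0, 1}" and "finite U" and "finite V"
  shows "Aprod A U V j = 1 \<longleftrightarrow> (\<forall>u\<in>U. A u j = 1) \<and> (\<forall>v\<in>V. A v j = 0)"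
proof -
  have "(1::nat) - A v j = 1 \<longleftrightarrow> A v j = 0" for v
    using assms(1)[of v j] by auto
  then show ?thesis
    unfolding Aprod_def nat_mult_eq_1_iff prod_eq_1_iff[OF assms(2)] prod_eq_1_iff[OF assms(3)]
    by blast
qed

theorem mainTheorem3:
  fixes M :: "'a measure"
    and A :: "nat \<Rightarrow> nat \<Rightarrow> nat"
    and R D :: "nat \<Rightarrow> 'a set"
  assumes A01: "\<And>i j. A i j \<in> {0, 1}"
    and A_rows: "\<And>i. \<exists>j. A i j \<noteq> 0"
    and R_meas: "\<And>j. R j \<in> sets M"
    and D_meas: "\<And>j. D j \<in> sets M"
    and a: "\<And>i j. i \<noteq> j \<Longrightarrow> emeasure M (R i \<inter> R j) = 0"
    and b: "ae_set_eq M (space M) (\<Union>j. R j)"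
    and c: "\<And>i. ae_set_eq M (D i) (\<Union>j\<in>{j. A i j = 1}. R j)"
  shows "(\<forall>i j. (A i j = 0 \<longrightarrow> emeasure M (R j \<inter> D i) = 0)
               \<and> (A i j = 1 \<longrightarrow> emeasure M (R j - D i) = 0))
       \<and> (\<forall>U V. finite U \<and> finite V \<and> finite {j. Aprod A U V j = 1} \<longrightarrow>
            ae_set_eq M
              (space M \<inter> (\<Inter>u\<in>U. D u) \<inter> (\<Inter>v\<in>V. space M - D v))
              (\<Union>j\<in>{j. Aprod A U V j = 1}. R j))"
proof -
  have R: "range R \<subseteq> sets M" and D: "range D \<subseteq> sets M"
    using R_meas D_meas by auto
  have cells_null: "R i \<inter> R j \<in> null_sets M" if "i \<noteq> j" for i j
    using a[OF that] R_meas by (simp add: null_sets_def)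
  show ?thesis
  proof (intro conjI allI impI)
    fix i j
    show "emeasure M (R j \<inter> D i) = 0" if "A i j = 0"
      using null_sets_inter_if_not_in_index[OF c D_meas R cells_null] that by (simp add: null_setsD1)
    show "emeasure M (R j - D i) = 0" if "A i j = 1"
      using null_sets_diff_if_in_index[OF c D_meas R] that by (simp add: null_setsD1)
  next
    fix U V :: "nat set"
    assume "finite U \<and> finite V \<and> finite {j. Aprod A U V j = 1}"
    then have "{j. Aprod A U V j = 1}
        = {j. (\<forall>u\<in>U. j \<in> {k. A u k = 1}) \<and> (\<forall>v\<in>V. j \<notin> {k. A v k = 1})}"
      using Aprod_eq_1_iff[OF A01] A01 by fastforce
    then show "ae_set_eq M (space M \<inter> (\<Inter>u\<in>U. D u) \<inter> (\<Inter>v\<in>V. space M - D v))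
                 (\<Union>j\<in>{j. Aprod A U V j = 1}. R j)"
      using ae_set_eq_cell_intersection[OF R D cells_null b c] by simp
  qed
qed

end
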